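(* Every equivalence class (under $\sim$) of balanced words contains a unique reduced word, and this reduced word is the minimal word of the equivalence class with respect to alphabetical order.
   Context: $\mathcal{A}$ is the free associative $\mathbb{C}$-algebra on noncommuting generators $L,R$; words are finite products of these letters, and a subword is a contiguous block of letters. A word is balanced if it contains equally many $L$'s and $R$'s. $\mathcal{J}$ is the two-sided ideal generated by $\{FG-GF : F,G \text{ nonempty balanced words}\}$, and $X\sim Y$ means $X-Y\in\mathcal{J}$ (equivalence classes of words are finite). Alphabetical order is the lexicographic order on words with $L$ before $R$, a proper prefix coming before its extensions (e.g. $LL<LLR$, $LLL<LR$). A word is prime if it is nonempty, balanced, and not a product of two nonempty balanced words. For a balanced word $W=a_1\cdots a_n$, $e_k(W)=\sum_{i=1}^k\overline{a_i}$ with $\overline{R}=1$, $\overline{L}=-1$. A prime $P$ of length $n$ is an upper prime if $e_k(P)>0$ for $1\le k\le n-1$, and a lower prime if $e_k(P)<0$ for $1\le k\le n-1$. A word is reduced if it contains no subword $UD$ with $U$ an upper prime and $D$ a lower prime. *)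

theory Defs
  imports Complex_Main
begin

datatype letter = L | R

type_synonym word = "letter list"

text \<open>The free associative algebra over the complex numbers on L, R: finitely
  supported coefficient functions on words, with the concatenation (Cauchy) product.\<close>

definition falg :: "(word \<Rightarrow> complex) set" where
  "falg = {f. finite {w. f w \<noteq> 0}}"

definition mono :: "word \<Rightarrow> (word \<Rightarrow> complex)" where
  "mono u = (\<lambda>w. if w = u then 1 else 0)"

definition amult :: "(word \<Rightarrow> complex) \<Rightarrow> (word \<Rightarrow> complex) \<Rightarrow> (word \<Rightarrow> complex)" where
  "amult f g = (\<lambda>w. \<Sum>i\<le>length w. f (take i w) * g (drop i w))"

definition balanced :: "word \<Rightarrow> bool" where
  "balanced w \<longleftrightarrow> length (filter (\<lambda>a. a = L) w) = length (filter (\<lambda>a. a = R) w)"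

inductive_set Jideal :: "(word \<Rightarrow> complex) set" where
  zero: "(\<lambda>_. 0) \<in> Jideal"
| gen: "F \<noteq> [] \<Longrightarrow> G \<noteq> [] \<Longrightarrow> balanced F \<Longrightarrow> balanced G \<Longrightarrow>
        (\<lambda>w. mono (F @ G) w - mono (G @ F) w) \<in> Jideal"
| add: "x \<in> Jideal \<Longrightarrow> y \<in> Jideal \<Longrightarrow> (\<lambda>w. x w + y w) \<in> Jideal"
| smult: "x \<in> Jideal \<Longrightarrow> (\<lambda>w. c * x w) \<in> Jideal"
| lmult: "x \<in> Jideal \<Longrightarrow> a \<in> falg \<Longrightarrow> amult a x \<in> Jideal"
| rmult: "x \<in> Jideal \<Longrightarrow> a \<in> falg \<Longrightarrow> amult x a \<in> Jideal"

definition wequiv :: "word \<Rightarrow> word \<Rightarrow> bool" (infix "\<approx>" 50) where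
  "X \<approx> Y \<longleftrightarrow> (\<lambda>w. mono X w - mono Y w) \<in> Jideal"

text \<open>Alphabetical order: lexicographic with L before R, proper prefixes first.\<close>
definition alph_less :: "word \<Rightarrow> word \<Rightarrow> bool" where
  "alph_less u v \<longleftrightarrow> (u, v) \<in> lexord {(L, R)}"

definition alph_le :: "word \<Rightarrow> word \<Rightarrow> bool" where
  "alph_le u v \<longleftrightarrow> u = v \<or> alph_less u v"

definition prime_word :: "word \<Rightarrow> bool" where
  "prime_word w \<longleftrightarrow> w \<noteq> [] \<and> balanced w \<and>
     \<not> (\<exists>u v. u \<noteq> [] \<and> v \<noteq> [] \<and> balanced u \<and> balanced v \<and> w = u @ v)"

definition lval :: "letter \<Rightarrow> int" where
  "lval a = (if a = R then 1 else -1)"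

definition ek :: "nat \<Rightarrow> word \<Rightarrow> int" where
  "ek k w = (\<Sum>i<k. lval (w ! i))"

definition upper_prime :: "word \<Rightarrow> bool" where
  "upper_prime w \<longleftrightarrow> prime_word w \<and> (\<forall>k. 1 \<le> k \<and> k \<le> length w - 1 \<longrightarrow> ek k w > 0)"

definition lower_prime :: "word \<Rightarrow> bool" where
  "lower_prime w \<longleftrightarrow> prime_word w \<and> (\<forall>k. 1 \<le> k \<and> k \<le> length w - 1 \<longrightarrow> ek k w < 0)"

definition reduced :: "word \<Rightarrow> bool" where
  "reduced w \<longleftrightarrow> \<not> (\<exists>a U D b. w = a @ U @ D @ b \<and> upper_prime U \<and> lower_prime D)"

end

theory Submission
  imports Defs "HOL-Library.Multiset"
begin

text \<open>
  Call a set of words swap-closed if it is closed under replacing a factor FG by GF, with F, G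
  nonempty and balanced. For a swap-closed set S, the linear form "sum of the coefficients on S"
  vanishes on every generator FG - GF and, since S is also closed under adding a fixed prefix or
  suffix, on the whole ideal J. Hence equivalent words lie in the same swap-closed sets; in
  particular they have the same multiset of steps (height, letter) of their lattice paths.

  In the finite class of W take the alphabetically least word X. It is reduced, because replacing
  a factor UD (U upper, D lower prime, so U starts with R and D with L) by DU gives a smaller
  equivalent word. If Y is another word of the class, then at the first position where they
  differ Y has R and X has L. Comparing step multisets, the remainder of Y, started at the common
  level h, must contain an L-step from level h and an R-step from level h - 1. The last visit to
  level h before the first descent below it and the first return to level h afterwards cut out an
  upper prime immediately followed by a lower prime, so Y is not reduced.
\<close>

section \<open>Swap-closed sets and the equivalence\<close>

definition supp :: "(word \<Rightarrow> complex) \<Rightarrow> word set" where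
  "supp f = {w. f w \<noteq> 0}"

definition swap_step :: "word \<Rightarrow> word \<Rightarrow> bool" where
  "swap_step u v \<longleftrightarrow> (\<exists>a F G b. F \<noteq> [] \<and> G \<noteq> [] \<and> balanced F \<and> balanced G \<and>
      u = a @ F @ G @ b \<and> v = a @ G @ F @ b)"

definition swap_closed :: "word set \<Rightarrow> bool" where
  "swap_closed S \<longleftrightarrow> (\<forall>u v. swap_step u v \<longrightarrow> (u \<in> S \<longleftrightarrow> v \<in> S))"

definition swap_null :: "(word \<Rightarrow> complex) \<Rightarrow> bool" where
  "swap_null f \<longleftrightarrow> finite (supp f) \<and> (\<forall>S. swap_closed S \<longrightarrow> sum f (supp f \<inter> S) = 0)"

lemma swap_step_in_context: "swap_step u v \<Longrightarrow> swap_step (x @ u @ y) (x @ v @ y)"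
  unfolding swap_step_def by (metis append.assoc)

lemma swap_closed_vimage_context: "swap_closed S \<Longrightarrow> swap_closed ((\<lambda>v. x @ v @ y) -` S)"
  using swap_step_in_context by (auto simp: swap_closed_def)

lemma sum_supp_eq:
  assumes "finite B" "supp f \<subseteq> B"
  shows "sum f (supp f \<inter> S) = sum f (B \<inter> S)"
  by (rule sum.mono_neutral_left) (use assms in \<open>auto simp: supp_def\<close>)

lemma swap_null_zero: "swap_null (\<lambda>_. 0)"
  by (simp add: swap_null_def supp_def)

lemma swap_null_add:
  assumes "swap_null f" "swap_null g"
  shows "swap_null (\<lambda>w. f w + g w)"
proof -
  let ?B = "supp f \<union> supp g"
  have fin: "finite ?B" using assms by (simp add: swap_null_def)
  have sub: "supp (\<lambda>w. f w + g w) \<subseteq> ?B" by (auto simp: supp_def)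
  show ?thesis unfolding swap_null_def
  proof (intro conjI allI impI)
    show "finite (supp (\<lambda>w. f w + g w))" using fin sub finite_subset by blast
    fix S assume S: "swap_closed S"
    have "sum (\<lambda>w. f w + g w) (supp (\<lambda>w. f w + g w) \<inter> S)
        = sum (\<lambda>w. f w + g w) (?B \<inter> S)"
      by (rule sum_supp_eq[OF fin sub])
    also have "\<dots> = sum f (supp f \<inter> S) + sum g (supp g \<inter> S)"
      by (simp add: sum.distrib sum_supp_eq[OF fin, of f] sum_supp_eq[OF fin, of g])
    finally show "sum (\<lambda>w. f w + g w) (supp (\<lambda>w. f w + g w) \<inter> S) = 0"
      using assms S by (simp add: swap_null_def)
  qed
qed

lemma swap_null_smult:
  assumes "swap_null f"
  shows "swap_null (\<lambda>w. c * f w)"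
proof -
  have fin: "finite (supp f)" using assms by (simp add: swap_null_def)
  have sub: "supp (\<lambda>w. c * f w) \<subseteq> supp f" by (auto simp: supp_def)
  show ?thesis unfolding swap_null_def
  proof (intro conjI allI impI)
    show "finite (supp (\<lambda>w. c * f w))" using fin sub finite_subset by blast
    fix S assume "swap_closed S"
    then have "sum f (supp f \<inter> S) = 0" using assms by (simp add: swap_null_def)
    moreover have "sum (\<lambda>w. c * f w) (supp (\<lambda>w. c * f w) \<inter> S) = c * sum f (supp f \<inter> S)"
      unfolding sum_supp_eq[OF fin sub] by (simp add: sum_distrib_left)
    ultimately show "sum (\<lambda>w. c * f w) (supp (\<lambda>w. c * f w) \<inter> S) = 0" by simp
  qed
qed

lemma swap_null_sum:
  assumes "finite U" "\<And>u. u \<in> U \<Longrightarrow> swap_null (g u)"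
  shows "swap_null (\<lambda>w. \<Sum>u\<in>U. g u w)"
  using assms by (induction U rule: finite_induct) (auto intro: swap_null_zero swap_null_add)

lemma swap_null_shift:
  assumes f: "swap_null f"
    and g_shift: "\<And>v. g (x @ v @ y) = f v"
    and g_supp: "supp g \<subseteq> range (\<lambda>v. x @ v @ y)"
  shows "swap_null g"
proof -
  let ?h = "\<lambda>v. x @ v @ y"
  have supp_g: "supp g = ?h ` supp f"
    using g_supp by (auto simp: supp_def g_shift)
  show ?thesis unfolding swap_null_def
  proof (intro conjI allI impI)
    show "finite (supp g)" using f supp_g by (simp add: swap_null_def)
    fix S assume S: "swap_closed S"
    have "supp g \<inter> S = ?h ` (supp f \<inter> ?h -` S)" unfolding supp_g by blast
    then have "sum g (supp g \<inter> S) = sum (g \<circ> ?h) (supp f \<inter> ?h -` S)"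
      by (simp add: sum.reindex inj_on_def)
    also have "\<dots> = sum f (supp f \<inter> ?h -` S)" by (simp add: comp_def g_shift)
    also have "\<dots> = 0" using f swap_closed_vimage_context[OF S] by (simp add: swap_null_def)
    finally show "sum g (supp g \<inter> S) = 0" .
  qed
qed

lemma amult_mono_left:
  "amult (mono u) f w = (if take (length u) w = u then f (drop (length u) w) else 0)"
proof -
  have "amult (mono u) f w = (\<Sum>i\<le>length w. if i = length u
      then (if take (length u) w = u then f (drop (length u) w) else 0) else 0)"
    unfolding amult_def mono_def
    by (rule sum.cong) (auto dest: arg_cong[where f = length])
  then show ?thesis
    by (cases "length u \<le> length w") (auto dest: arg_cong[where f = length])
qed

lemma amult_mono_right:
  "amult f (mono u) w = (if length u \<le> length w \<and> drop (length w - length u) w = u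
      then f (take (length w - length u) w) else 0)"
proof -
  have "amult f (mono u) w = (\<Sum>i\<le>length w. if i = length w - length u
      then (if length u \<le> length w \<and> drop (length w - length u) w = u
        then f (take (length w - length u) w) else 0) else 0)"
    unfolding amult_def mono_def by (rule sum.cong) auto
  then show ?thesis by simp
qed

lemma swap_null_mono_lmult:
  assumes "swap_null f"
  shows "swap_null (amult (mono u) f)"
proof (rule swap_null_shift[OF assms, where x = u and y = "[]"])
  show "supp (amult (mono u) f) \<subseteq> range (\<lambda>v. u @ v @ [])"
    by (auto simp: amult_mono_left supp_def) (metis append_take_drop_id rangeI)
qed (simp add: amult_mono_left)

lemma swap_null_mono_rmult:
  assumes "swap_null f"
  shows "swap_null (amult f (mono u))"
proof (rule swap_null_shift[OF assms, where x = "[]" and y = u])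
  show "supp (amult f (mono u)) \<subseteq> range (\<lambda>v. [] @ v @ u)"
    by (auto simp: amult_mono_right supp_def) (metis append_take_drop_id rangeI)
qed (simp add: amult_mono_right)

lemma sum_mult_mono:
  assumes "finite A" "supp a \<subseteq> A"
  shows "(\<Sum>u\<in>A. a u * mono u t) = a t"
  using assms by (auto simp: mono_def supp_def if_distrib cong: if_cong)

lemma amult_eq_sum_mono_left:
  assumes "a \<in> falg"
  shows "amult a f = (\<lambda>w. \<Sum>u\<in>supp a. a u * amult (mono u) f w)"
proof
  fix w
  have fin: "finite (supp a)" using assms by (simp add: falg_def supp_def)
  have "(\<Sum>u\<in>supp a. a u * amult (mono u) f w)
      = (\<Sum>i\<le>length w. (\<Sum>u\<in>supp a. a u * mono u (take i w)) * f (drop i w))"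
    unfolding amult_def
    by (simp add: sum_distrib_left sum_distrib_right mult.assoc sum.swap[of _ "supp a"])
  also have "\<dots> = amult a f w" by (simp add: amult_def sum_mult_mono[OF fin])
  finally show "amult a f w = (\<Sum>u\<in>supp a. a u * amult (mono u) f w)" by simp
qed

lemma amult_eq_sum_mono_right:
  assumes "a \<in> falg"
  shows "amult f a = (\<lambda>w. \<Sum>u\<in>supp a. a u * amult f (mono u) w)"
proof
  fix w
  have fin: "finite (supp a)" using assms by (simp add: falg_def supp_def)
  have "(\<Sum>u\<in>supp a. a u * amult f (mono u) w)
      = (\<Sum>i\<le>length w. f (take i w) * (\<Sum>u\<in>supp a. a u * mono u (drop i w)))"
    unfolding amult_def
    by (simp add: sum_distrib_left mult.left_commute sum.swap[of _ "supp a"])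
  also have "\<dots> = amult f a w" by (simp add: amult_def sum_mult_mono[OF fin])
  finally show "amult f a w = (\<Sum>u\<in>supp a. a u * amult f (mono u) w)" by simp
qed

lemma swap_null_lmult: "swap_null f \<Longrightarrow> a \<in> falg \<Longrightarrow> swap_null (amult a f)"
  by (simp add: amult_eq_sum_mono_left falg_def supp_def swap_null_sum swap_null_smult
      swap_null_mono_lmult)

lemma swap_null_rmult: "swap_null f \<Longrightarrow> a \<in> falg \<Longrightarrow> swap_null (amult f a)"
  by (simp add: amult_eq_sum_mono_right falg_def supp_def swap_null_sum swap_null_smult
      swap_null_mono_rmult)

lemma swap_null_commutator:
  assumes "F \<noteq> []" "G \<noteq> []" "balanced F" "balanced G"
  shows "swap_null (\<lambda>w. mono (F @ G) w - mono (G @ F) w)"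
proof -
  let ?f = "\<lambda>w. mono (F @ G) w - mono (G @ F) w"
  have sub: "supp ?f \<subseteq> {F @ G, G @ F}" by (auto simp: supp_def mono_def)
  have swap: "swap_step (F @ G) (G @ F)"
    unfolding swap_step_def using assms by (metis append_Nil append_Nil2)
  show ?thesis unfolding swap_null_def
  proof (intro conjI allI impI)
    show "finite (supp ?f)" using sub finite_subset by blast
    fix S assume "swap_closed S"
    then have "F @ G \<in> S \<longleftrightarrow> G @ F \<in> S" using swap by (simp add: swap_closed_def)
    then have "sum ?f ({F @ G, G @ F} \<inter> S) = 0"
      by (cases "F @ G = G @ F"; cases "F @ G \<in> S") (auto simp: mono_def)
    then show "sum ?f (supp ?f \<inter> S) = 0" using sum_supp_eq[OF _ sub] by simp
  qed
qed

lemma Jideal_swap_null: "f \<in> Jideal \<Longrightarrow> swap_null f"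
  by (induction rule: Jideal.induct)
     (auto intro: swap_null_zero swap_null_commutator swap_null_add swap_null_smult
      swap_null_lmult swap_null_rmult)

lemma wequiv_swap_closed:
  assumes "X \<approx> Y" "swap_closed S" "X \<in> S"
  shows "Y \<in> S"
proof (rule ccontr)
  assume Y: "Y \<notin> S"
  let ?f = "\<lambda>w. mono X w - mono Y w"
  have "sum ?f (supp ?f \<inter> S) = sum ?f ({X, Y} \<inter> S)"
    by (rule sum_supp_eq) (auto simp: supp_def mono_def)
  also have "\<dots> = 1" using assms Y by (auto simp: mono_def)
  finally show False
    using Jideal_swap_null assms by (simp add: wequiv_def swap_null_def)
qed

lemma wequiv_refl: "X \<approx> X"
  using Jideal.zero by (simp add: wequiv_def)

lemma wequiv_trans: "X \<approx> Y \<Longrightarrow> Y \<approx> Z \<Longrightarrow> X \<approx> Z"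
  unfolding wequiv_def by (drule (1) Jideal.add) simp

lemma mono_append_left:
  "mono (u @ v) w = (if take (length u) w = u then mono v (drop (length u) w) else 0)"
  by (auto simp: mono_def append_eq_conv_conj) (metis append_take_drop_id)

lemma mono_append_right:
  "mono (v @ u) w = (if length u \<le> length w \<and> drop (length w - length u) w = u
      then mono v (take (length w - length u) w) else 0)"
  by (auto simp: mono_def) (metis append_take_drop_id)

lemma amult_mono_diff_left:
  "amult (mono u) (\<lambda>w. mono p w - mono q w) = (\<lambda>w. mono (u @ p) w - mono (u @ q) w)"
  by (simp add: fun_eq_iff amult_mono_left mono_append_left)

lemma amult_mono_diff_right:
  "amult (\<lambda>w. mono p w - mono q w) (mono u) = (\<lambda>w. mono (p @ u) w - mono (q @ u) w)"
  by (simp add: fun_eq_iff amult_mono_right mono_append_right)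

lemma wequiv_swap:
  assumes "F \<noteq> []" "G \<noteq> []" "balanced F" "balanced G"
  shows "a @ F @ G @ b \<approx> a @ G @ F @ b"
proof -
  have mono_falg: "mono u \<in> falg" for u by (simp add: falg_def mono_def)
  have "amult (mono a) (amult (\<lambda>w. mono (F @ G) w - mono (G @ F) w) (mono b)) \<in> Jideal"
    by (intro Jideal.lmult Jideal.rmult Jideal.gen assms mono_falg)
  then show ?thesis by (simp add: amult_mono_diff_left amult_mono_diff_right wequiv_def)
qed

section \<open>Heights and step multisets\<close>

definition height :: "word \<Rightarrow> int" where
  "height w = sum_list (map lval w)"

primrec steps :: "int \<Rightarrow> word \<Rightarrow> (int \<times> letter) multiset" where
  "steps h [] = {#}"
| "steps h (a # w) = add_mset (h, a) (steps (h + lval a) w)"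

lemma lval_simps [simp]: "lval L = -1" "lval R = 1"
  by (auto simp: lval_def)

lemma height_simps [simp]:
  "height [] = 0" "height (a # w) = lval a + height w" "height (u @ v) = height u + height v"
  by (auto simp: height_def)

lemma height_take_Suc:
  "i < length w \<Longrightarrow> height (take (Suc i) w) = height (take i w) + lval (w ! i)"
  by (simp add: take_Suc_conv_app_nth)

lemma height_take_drop:
  "height (take k (drop i w)) = height (take (i + k) w) - height (take i w)"
  by (simp add: take_add)

lemma balanced_iff_height: "balanced w \<longleftrightarrow> height w = 0"
proof -
  have "height w = int (length (filter (\<lambda>a. a = R) w)) - int (length (filter (\<lambda>a. a = L) w))"
  proof (induction w)
    case (Cons a w) then show ?case by (cases a) auto
  qed simp
  then show ?thesis by (auto simp: balanced_def)
qed

lemma steps_append: "steps h (u @ v) = steps h u + steps (h + height u) v"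
  by (induction u arbitrary: h) (auto simp: algebra_simps)

lemma size_steps: "size (steps h w) = length w"
  by (induction w arbitrary: h) auto

lemma mem_steps_iff:
  "(c, b) \<in># steps h w \<longleftrightarrow> (\<exists>i<length w. h + height (take i w) = c \<and> w ! i = b)"
proof (induction w arbitrary: h)
  case (Cons a w)
  then show ?case by (auto simp: Ex_less_Suc2 algebra_simps)
qed simp

lemma swap_step_steps: "swap_step u v \<Longrightarrow> steps h u = steps h v"
  unfolding swap_step_def by (auto simp: steps_append balanced_iff_height algebra_simps)

lemma wequiv_steps: "X \<approx> Y \<Longrightarrow> steps h X = steps h Y"
  using wequiv_swap_closed[of X Y "{w. steps h w = steps h X}"] swap_step_steps
  by (auto simp: swap_closed_def)

lemma wequiv_length: "X \<approx> Y \<Longrightarrow> length X = length Y"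
  by (metis wequiv_steps size_steps)

section \<open>Upper and lower primes in lattice paths\<close>

lemma ek_eq_height_take: "k \<le> length w \<Longrightarrow> ek k w = height (take k w)"
proof (induction k)
  case (Suc k)
  then show ?case by (simp add: ek_def height_take_Suc)
qed (simp add: ek_def)

lemma prime_wordI:
  assumes "U \<noteq> []" "height U = 0" "\<And>k. 0 < k \<Longrightarrow> k < length U \<Longrightarrow> height (take k U) \<noteq> 0"
  shows "prime_word U"
  unfolding prime_word_def balanced_iff_height
proof (intro conjI notI)
  assume "\<exists>u v. u \<noteq> [] \<and> v \<noteq> [] \<and> height u = 0 \<and> height v = 0 \<and> U = u @ v"
  then obtain u v where "u \<noteq> []" "v \<noteq> []" "height u = 0" "U = u @ v" by blast
  then show False using assms(3)[of "length u"] by simp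
qed (use assms in auto)

lemma upper_primeI:
  assumes "U \<noteq> []" "height U = 0" "\<And>k. 0 < k \<Longrightarrow> k < length U \<Longrightarrow> height (take k U) > 0"
  shows "upper_prime U"
proof -
  have "prime_word U"
    using assms by (intro prime_wordI) (simp_all add: order_less_imp_not_eq order_less_imp_not_eq2)
  moreover have "ek k U > 0" if "1 \<le> k" "k \<le> length U - 1" for k
    using that assms(3)[of k] by (simp add: ek_eq_height_take)
  ultimately show ?thesis by (simp add: upper_prime_def)
qed

lemma lower_primeI:
  assumes "U \<noteq> []" "height U = 0" "\<And>k. 0 < k \<Longrightarrow> k < length U \<Longrightarrow> height (take k U) < 0"
  shows "lower_prime U"
proof -
  have "prime_word U"
    using assms by (intro prime_wordI) (simp_all add: order_less_imp_not_eq order_less_imp_not_eq2)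
  moreover have "ek k U < 0" if "1 \<le> k" "k \<le> length U - 1" for k
    using that assms(3)[of k] by (simp add: ek_eq_height_take)
  ultimately show ?thesis by (simp add: lower_prime_def)
qed

lemma upper_prime_take_drop:
  assumes "i < j" "j \<le> length w" "height (take j w) = height (take i w)"
    and "\<And>k. i < k \<Longrightarrow> k < j \<Longrightarrow> height (take k w) > height (take i w)"
  shows "upper_prime (take (j - i) (drop i w))"
proof (rule upper_primeI)
  fix k assume "0 < k" "k < length (take (j - i) (drop i w))"
  then show "height (take k (take (j - i) (drop i w))) > 0"
    using assms(4)[of "i + k"] by (auto simp: height_take_drop less_diff_conv)
qed (use assms height_take_drop[of "j - i" i w] in auto)

lemma lower_prime_take_drop:
  assumes "i < j" "j \<le> length w" "height (take j w) = height (take i w)"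
    and "\<And>k. i < k \<Longrightarrow> k < j \<Longrightarrow> height (take k w) < height (take i w)"
  shows "lower_prime (take (j - i) (drop i w))"
proof (rule lower_primeI)
  fix k assume "0 < k" "k < length (take (j - i) (drop i w))"
  then show "height (take k (take (j - i) (drop i w))) < 0"
    using assms(4)[of "i + k"] by (auto simp: height_take_drop less_diff_conv)
qed (use assms height_take_drop[of "j - i" i w] in auto)

lemma prime_word_length:
  assumes "prime_word U"
  shows "1 < length U"
proof -
  have "U \<noteq> []" "height U = 0" using assms by (auto simp: prime_word_def balanced_iff_height)
  then show ?thesis by (cases U; cases "tl U") (auto simp: lval_def split: if_splits)
qed

lemma upper_prime_ConsE:
  assumes "upper_prime U"
  obtains U' where "U = R # U'"
proof -
  have "1 < length U" using assms prime_word_length by (auto simp: upper_prime_def)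
  moreover from this have "ek 1 U > 0" using assms by (auto simp: upper_prime_def)
  ultimately show ?thesis using that by (cases U; cases "hd U") (auto simp: ek_def)
qed

lemma lower_prime_ConsE:
  assumes "lower_prime U"
  obtains U' where "U = L # U'"
proof -
  have "1 < length U" using assms prime_word_length by (auto simp: lower_prime_def)
  moreover from this have "ek 1 U < 0" using assms by (auto simp: lower_prime_def)
  ultimately show ?thesis using that by (cases U; cases "hd U") (auto simp: ek_def)
qed

lemma up_crossing:
  assumes "k \<le> length w" "0 \<le> c" "c < height (take k w)"
  shows "\<exists>j<k. height (take j w) = c \<and> w ! j = R"
  using assms
proof (induction k)
  case (Suc k)
  show ?case
  proof (cases "c < height (take k w)")
    case True
    then show ?thesis using Suc by (meson Suc_leD less_SucI)
  next
    case False
    then have "height (take k w) = c \<and> w ! k = R"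
      using Suc.prems height_take_Suc[of k w] by (cases "w ! k") auto
    then show ?thesis by blast
  qed
qed simp

lemma upper_prime_ending_at:
  assumes "i < p" "p \<le> length w" "height (take i w) = height (take p w)"
    and "\<And>k. i \<le> k \<Longrightarrow> k \<le> p \<Longrightarrow> height (take p w) \<le> height (take k w)"
  obtains p' where "p' < p" "upper_prime (take (p - p') (drop p' w))"
proof -
  define P where "P k \<longleftrightarrow> i \<le> k \<and> k < p \<and> height (take k w) = height (take p w)" for k
  define p' where "p' = (GREATEST k. P k)"
  have "P i" using assms by (simp add: P_def)
  then have p': "P p'" and last: "\<And>k. P k \<Longrightarrow> k \<le> p'"
    unfolding p'_def using Greatest_le_nat[of P _ p] GreatestI_nat[of P i p] by (auto simp: P_def)
  have "upper_prime (take (p - p') (drop p' w))"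
  proof (rule upper_prime_take_drop)
    fix k assume "p' < k" "k < p"
    then show "height (take p' w) < height (take k w)"
      using p' last[of k] assms(4)[of k] by (force simp: P_def)
  qed (use p' assms in \<open>auto simp: P_def\<close>)
  then show ?thesis using that p' unfolding P_def by blast
qed

lemma lower_prime_starting_at:
  assumes "p < r" "r \<le> length w" "w ! p = L" "height (take p w) \<le> height (take r w)"
  obtains q where "q \<le> r" "p < q" "lower_prime (take (q - p) (drop p w))"
proof -
  let ?H = "\<lambda>k. height (take k w)"
  define P where "P k \<longleftrightarrow> p < k \<and> ?H p \<le> ?H k" for k
  define q where "q = (LEAST k. P k)"
  have q: "P q" "q \<le> r" using LeastI[of P r] Least_le[of P r] assms by (auto simp: P_def q_def)
  have below: "?H k < ?H p" if "p < k" "k < q" for k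
    using not_less_Least[of k P] that by (auto simp: P_def q_def)
  have "\<not> P (Suc p)" using assms height_take_Suc[of p w] by (simp add: P_def)
  then have "q \<noteq> Suc p" using q(1) by blast
  then have "Suc p < q" using q(1) by (simp add: P_def)
  then have "?H q = ?H (q - 1) + lval (w ! (q - 1))"
    using height_take_Suc[of "q - 1" w] q(2) assms(2) by simp
  moreover have "?H (q - 1) < ?H p" by (rule below) (use \<open>Suc p < q\<close> in simp_all)
  ultimately have "?H q \<le> ?H p" by (simp add: lval_def)
  then have "?H q = ?H p" using q(1) by (simp add: P_def)
  then have "lower_prime (take (q - p) (drop p w))"
    using q assms(2) below by (intro lower_prime_take_drop) (simp_all add: P_def)
  then show ?thesis using that q by (simp add: P_def)
qed

lemma upper_lower_factor:
  assumes "w ! 0 = R"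
    and "i < length w" "height (take i w) = 0" "w ! i = L"
    and "j < length w" "height (take j w) = -1" "w ! j = R"
  shows "\<exists>c U D e. w = c @ U @ D @ e \<and> upper_prime U \<and> lower_prime D"
proof -
  let ?H = "\<lambda>k. height (take k w)"
  define P where "P k \<longleftrightarrow> k < length w \<and> ?H (Suc k) < 0" for k
  define p where "p = (LEAST k. P k)"
  have "P i" using assms(2-4) height_take_Suc[of i w] by (simp add: P_def)
  then have p: "P p" "p \<le> i" using LeastI[of P i] Least_le[of P i] by (auto simp: p_def)
  have nonneg: "0 \<le> ?H k" if "k \<le> p" for k
  proof (cases k)
    case (Suc k')
    then show ?thesis using not_less_Least[of k' P] that p by (auto simp: P_def p_def)
  qed simp
  have step_p: "?H (Suc p) = ?H p + lval (w ! p)" using p by (simp add: P_def height_take_Suc)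
  then have "w ! p \<noteq> R" using p(1) nonneg[of p] by (auto simp: P_def)
  then have at_p: "?H p = 0" "w ! p = L"
    using step_p p(1) nonneg[of p] by (cases "w ! p"; auto simp: P_def)+
  then have "0 < p" using assms(1) by (cases p) auto
  then obtain p' where p': "p' < p" "upper_prime (take (p - p') (drop p' w))"
    using upper_prime_ending_at[of 0 p w] nonneg at_p p by (auto simp: P_def)
  have "p < j" using nonneg[of j] assms(6) by fastforce
  moreover have "?H (Suc j) = 0" using assms(5-7) by (simp add: height_take_Suc)
  ultimately obtain q where q: "q \<le> Suc j" "p < q" "lower_prime (take (q - p) (drop p w))"
    using lower_prime_starting_at[of p "Suc j" w] assms(5) at_p by auto
  have "w = take p' w @ take (p - p') (drop p' w) @ take (q - p) (drop p w) @ drop q w"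
    using p' q by (simp flip: take_add append_assoc)
  then show ?thesis using p' q by blast
qed

lemma steps_L_R_not_reduced:
  assumes "steps h (L # xs) = steps h (R # ys)"
  shows "\<not> reduced (a @ R # ys)"
proof -
  have "(h, L) \<in># steps h (R # ys)" unfolding assms[symmetric] by simp
  then obtain i where i: "i < length (R # ys)" "height (take i (R # ys)) = 0" "(R # ys) ! i = L"
    unfolding mem_steps_iff by auto
  have "(h, R) \<in># steps h (L # xs)" unfolding assms by simp
  then have "(h, R) \<in># steps (h - 1) xs" by simp
  then obtain k where k: "k < length xs" "height (take k xs) = 1"
    unfolding mem_steps_iff by auto
  then obtain j where "j < k" "height (take j xs) = 0" "xs ! j = R"
    using up_crossing[of k xs 0] by auto
  then have "(h - 1, R) \<in># steps (h - 1) xs"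
    using k(1) unfolding mem_steps_iff by (auto intro!: exI[of _ j])
  then have "(h - 1, R) \<in># steps h (L # xs)" by simp
  then obtain j'
    where j': "j' < length (R # ys)" "height (take j' (R # ys)) = -1" "(R # ys) ! j' = R"
    unfolding assms mem_steps_iff by auto
  obtain c U D e where "R # ys = c @ U @ D @ e" "upper_prime U" "lower_prime D"
    using upper_lower_factor[OF _ i j'] by auto
  then show ?thesis unfolding reduced_def by (metis append.assoc)
qed

section \<open>The alphabetically least word of a class\<close>

lemma alph_less_irrefl: "\<not> alph_less x x"
  unfolding alph_less_def by (rule lexord_irreflexive) auto

lemma alph_less_trans: "alph_less x y \<Longrightarrow> alph_less y z \<Longrightarrow> alph_less x z"
  unfolding alph_less_def by (rule lexord_trans) (auto simp: trans_def)

lemma alph_less_linear: "alph_less x y \<or> x = y \<or> alph_less y x"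
  unfolding alph_less_def
  by (rule lexord_linear) (metis insertI1 letter.exhaust)

lemma alph_less_append_L_R: "alph_less (a @ L # u) (a @ R # v)"
  by (simp add: alph_less_def lexord_same_pref_iff)

lemma finite_wequiv_class: "finite {Y. Y \<approx> W}"
proof (rule finite_subset)
  show "{Y. Y \<approx> W} \<subseteq> {xs. set xs \<subseteq> {L, R} \<and> length xs = length W}"
    using wequiv_length letter.exhaust by blast
qed (simp add: finite_lists_length_eq)

lemma ex_alph_least_wequiv: "\<exists>X. X \<approx> W \<and> (\<forall>Y. Y \<approx> W \<longrightarrow> alph_le X Y)"
proof -
  have "\<exists>X\<in>{Y. Y \<approx> W}. \<forall>Y\<in>{Y. Y \<approx> W}. Y \<noteq> X \<longrightarrow> \<not> alph_less Y X"
    using wequiv_refl alph_less_irrefl alph_less_trans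
    by (intro Finite_Set.bex_min_element finite_wequiv_class asymp_onI transp_onI) blast+
  then show ?thesis using alph_less_linear by (auto simp: alph_le_def)
qed

lemma alph_least_reduced:
  assumes "X \<approx> W" and least: "\<forall>Y. Y \<approx> W \<longrightarrow> alph_le X Y"
  shows "reduced X"
  unfolding reduced_def
proof
  assume "\<exists>a U D b. X = a @ U @ D @ b \<and> upper_prime U \<and> lower_prime D"
  then obtain a U D b where X: "X = a @ U @ D @ b" and UD: "upper_prime U" "lower_prime D"
    by blast
  obtain U' D' where "U = R # U'" "D = L # D'"
    using upper_prime_ConsE[OF UD(1)] lower_prime_ConsE[OF UD(2)] by metis
  then have less: "alph_less (a @ D @ U @ b) X" using X alph_less_append_L_R by simp
  have "a @ D @ U @ b \<approx> X"
    using X UD by (auto intro: wequiv_swap simp: upper_prime_def lower_prime_def prime_word_def)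
  then have "alph_le X (a @ D @ U @ b)" using least wequiv_trans assms(1) by blast
  then show False using less alph_less_irrefl alph_less_trans by (auto simp: alph_le_def)
qed

lemma reduced_eq_alph_least:
  assumes "X \<approx> W" and least: "\<forall>Z. Z \<approx> W \<longrightarrow> alph_le X Z"
    and "Y \<approx> W" "reduced Y"
  shows "Y = X"
proof (rule ccontr)
  assume "Y \<noteq> X"
  have steps: "steps 0 Y = steps 0 X" using assms wequiv_steps by metis
  then have "length Y = length X" by (metis size_steps)
  then obtain a y x ys xs where Y: "Y = a @ y # ys" and X: "X = a @ x # xs" and "y \<noteq> x"
    using same_length_different[OF \<open>Y \<noteq> X\<close>] by auto
  show False
  proof (cases y)
    case L
    then have "alph_less Y X" using X Y \<open>y \<noteq> x\<close> alph_less_append_L_R by (cases x) auto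
    moreover have "alph_le X Y" using least assms(3) by blast
    ultimately show False using alph_less_irrefl alph_less_trans by (auto simp: alph_le_def)
  next
    case R
    then have "x = L" using \<open>y \<noteq> x\<close> by (cases x) auto
    then have "steps (height a) (L # xs) = steps (height a) (R # ys)"
      using steps X Y R by (simp add: steps_append)
    then show False using steps_L_R_not_reduced assms(4) Y R by blast
  qed
qed

theorem proposition6p6:
  fixes W :: word
  assumes "balanced W"
  shows "\<exists>X. X \<approx> W \<and> reduced X
            \<and> (\<forall>Y. Y \<approx> W \<and> reduced Y \<longrightarrow> Y = X)
            \<and> (\<forall>Y. Y \<approx> W \<longrightarrow> alph_le X Y)"
proof -
  \<comment> \<open>The argument does not use that W is balanced.\<close>
  obtain X where "X \<approx> W" "\<forall>Y. Y \<approx> W \<longrightarrow> alph_le X Y"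
    using ex_alph_least_wequiv by blast
  then show ?thesis using alph_least_reduced reduced_eq_alph_least by blast
qed

end
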